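(* Let $b\ge 1$, $d=b+1$, $n=2b$, and let $f,g:\mathbb{F}_2^d\to\mathbb{F}_2$ be nonlinear bipermutive local rules whose no-boundary CA $F,G:\mathbb{F}_2^{2b}\to\mathbb{F}_2^b$ form a pair of orthogonal CA, with superposition S-box $H:\mathbb{F}_2^n\to\mathbb{F}_2^n$. Let $v=(v_1,\dots,v_n)\in\mathbb{F}_2^n\setminus\{\underline 0\}$ with $nl(v\cdot H)=0$. (i) If $v_b=v_n=0$, then the right shift $v'=(0,v_1,\dots,v_{n-1})$ satisfies $nl(v'\cdot H)=0$. (ii) If $v_1=v_{b+1}=0$, then the left shift $v'=(v_2,\dots,v_n,0)$ satisfies $nl(v'\cdot H)=0$.
   Context: A local rule $f:\mathbb{F}_2^d\to\mathbb{F}_2$ is bipermutive if $f(x_1,\dots,x_d)=x_1\oplus\varphi(x_2,\dots,x_{d-1})\oplus x_d$ for some $\varphi:\mathbb{F}_2^{d-2}\to\mathbb{F}_2$; it is nonlinear if its algebraic degree is at least 2. With $b=d-1$, the no-boundary CA of $f$ is $F:\mathbb{F}_2^{2b}\to\mathbb{F}_2^b$, $F(x)_i=f(x_i,\dots,x_{i+b})$, $i=1,\dots,b$; it defines the $2^b\times 2^b$ Latin square with entry $F(x\|y)$ at row $x$, column $y$ ($x,y\in\mathbb{F}_2^b$, $\|$ = concatenation). $F,G$ with bipermutive rules of equal diameter are orthogonal if $(x,y)\mapsto(F(x\|y),G(x\|y))$ is a bijection of $\mathbb{F}_2^b\times\mathbb{F}_2^b$. The superposition S-box is $H(x)=F(x)\|G(x)$,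 i.e. $H(x)_i=f(x_i,\dots,x_{i+b})$, $H(x)_{b+i}=g(x_i,\dots,x_{i+b})$ for $i=1,\dots,b$. The component function is $v\cdot H(x)=\bigoplus_i v_iH(x)_i$, and $nl(h)$ is the minimum Hamming distance of $h$ to the affine Boolean functions ($nl(h)=0$ iff $h$ is affine). *)

theory Defs
  imports Main
begin

text \<open>F_2 is modelled by bool (addition = xor, i.e. \<noteq>; multiplication = \<and>).
  Vectors of F_2^m are bool lists of length m; the paper's 1-based coordinate
  x_i is the list entry x ! (i-1).\<close>

definition vecs :: "nat \<Rightarrow> bool list set" where
  "vecs m = {xs. length xs = m}"

definition dotp :: "bool list \<Rightarrow> bool list \<Rightarrow> bool" where
  "dotp u w = odd (card {i. i < length u \<and> u ! i \<and> w ! i})"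

definition affine_fun :: "nat \<Rightarrow> bool list \<Rightarrow> bool \<Rightarrow> bool list \<Rightarrow> bool" where
  "affine_fun m a c = (\<lambda>x. c \<noteq> dotp a x)"

definition hdist :: "nat \<Rightarrow> (bool list \<Rightarrow> bool) \<Rightarrow> (bool list \<Rightarrow> bool) \<Rightarrow> nat" where
  "hdist m h k = card {x \<in> vecs m. h x \<noteq> k x}"

definition nl :: "nat \<Rightarrow> (bool list \<Rightarrow> bool) \<Rightarrow> nat" where
  "nl m h = Min {hdist m h (affine_fun m a c) | a c. a \<in> vecs m}"

text \<open>Algebraic degree via the algebraic normal form: the ANF coefficient of the
  monomial x^u is the xor of h(x) over all x \<le> u (componentwise).\<close>

definition below :: "bool list \<Rightarrow> bool list \<Rightarrow> bool" where
  "below x u = (\<forall>i < length x. x ! i \<longrightarrow> u ! i)"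

definition anf_coeff :: "nat \<Rightarrow> (bool list \<Rightarrow> bool) \<Rightarrow> bool list \<Rightarrow> bool" where
  "anf_coeff m h u = odd (card {x \<in> vecs m. below x u \<and> h x})"

definition hweight :: "bool list \<Rightarrow> nat" where
  "hweight u = card {i. i < length u \<and> u ! i}"

definition alg_deg :: "nat \<Rightarrow> (bool list \<Rightarrow> bool) \<Rightarrow> nat" where
  "alg_deg m h = Max (insert 0 {hweight u | u. u \<in> vecs m \<and> anf_coeff m h u})"

definition nonlinear :: "nat \<Rightarrow> (bool list \<Rightarrow> bool) \<Rightarrow> bool" where
  "nonlinear d f = (alg_deg d f \<ge> 2)"

definition bipermutive :: "nat \<Rightarrow> (bool list \<Rightarrow> bool) \<Rightarrow> bool" where
  "bipermutive d f = (\<exists>\<phi> :: bool list \<Rightarrow> bool. \<forall>x \<in> vecs d.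
      f x = ((x ! 0 \<noteq> \<phi> (take (d - 2) (drop 1 x))) \<noteq> x ! (d - 1)))"

definition nbca :: "nat \<Rightarrow> (bool list \<Rightarrow> bool) \<Rightarrow> bool list \<Rightarrow> bool list" where
  "nbca b f x = map (\<lambda>i. f (take (b + 1) (drop i x))) [0..<b]"

definition orthogonal_ca :: "nat \<Rightarrow> (bool list \<Rightarrow> bool) \<Rightarrow> (bool list \<Rightarrow> bool) \<Rightarrow> bool" where
  "orthogonal_ca b f g = bij_betw (\<lambda>(x, y). (nbca b f (x @ y), nbca b g (x @ y)))
      (vecs b \<times> vecs b) (vecs b \<times> vecs b)"

definition sbox :: "nat \<Rightarrow> (bool list \<Rightarrow> bool) \<Rightarrow> (bool list \<Rightarrow> bool) \<Rightarrow> bool list \<Rightarrow> bool list" where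
  "sbox b f g x = nbca b f x @ nbca b g x"

end

theory Submission
  imports Defs
begin

(* Write sl x = (x_2, ..., x_n, 0) and sr x = (0, x_1, ..., x_(n-1)).  For i < b the
   coordinates F(x)_(i+1) and F(sl x)_i read the same window of x, and likewise for G;
   hence the right shift v' of v satisfies v'.H(x) = v.H(sl x) as soon as v_b = v_n = 0,
   the weights of F(sl x)_b and G(sl x)_b, the only coordinates reading the padding cell.  Since sl is linear with adjoint sr,
   composing the affine function v.H with sl is again affine. *)

lemma finite_vecs: "finite (vecs m)"
proof -
  have "vecs m = {l. set l \<subseteq> (UNIV :: bool set) \<and> length l = m}"
    by (auto simp: vecs_def)
  then show ?thesis
    using finite_lists_length_eq[of "UNIV :: bool set" m] by simp
qed

lemma dotp_Nil [simp]: "dotp [] w = False"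
  by (simp add: dotp_def)

lemma dotp_Cons: "dotp (a # u) (c # w) = ((a \<and> c) \<noteq> dotp u w)"
proof -
  have "{i. i < length (a # u) \<and> (a # u) ! i \<and> (c # w) ! i}
      = (if a \<and> c then {0} else {}) \<union> Suc ` {i. i < length u \<and> u ! i \<and> w ! i}"
    by (auto simp: less_Suc_eq_0_disj)
  moreover have "finite {i. i < length u \<and> u ! i \<and> w ! i}"
    by simp
  ultimately show ?thesis
    by (cases "a \<and> c") (auto simp: dotp_def card_image)
qed

lemma dotp_append:
  "length u\<^sub>1 = length w\<^sub>1 \<Longrightarrow> dotp (u\<^sub>1 @ u\<^sub>2) (w\<^sub>1 @ w\<^sub>2) = (dotp u\<^sub>1 w\<^sub>1 \<noteq> dotp u\<^sub>2 w\<^sub>2)"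
  by (induction u\<^sub>1 w\<^sub>1 rule: list_induct2) (auto simp: dotp_Cons)

lemma dotp_tl_snoc:
  assumes "length u = length w" and "w \<noteq> []"
  shows "dotp u (tl w @ [c]) = (dotp (False # butlast u) w \<noteq> (last u \<and> c))"
proof -
  have "u \<noteq> []" and "w = hd w # tl w"
    using assms by auto
  then have "dotp u (tl w @ [c]) = dotp (butlast u @ [last u]) (tl w @ [c])"
    by simp
  also have "\<dots> = (dotp (butlast u) (tl w) \<noteq> (last u \<and> c))"
    using assms by (simp add: dotp_append dotp_Cons)
  also have "dotp (butlast u) (tl w) = dotp (False # butlast u) w"
    using \<open>w = hd w # tl w\<close> by (metis dotp_Cons)
  finally show ?thesis .
qed

lemma dotp_Cons_butlast:
  assumes "length u = length w" and "w \<noteq> []"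
  shows "dotp u (c # butlast w) = (dotp (tl u @ [False]) w \<noteq> (hd u \<and> c))"
proof -
  have "u = hd u # tl u" and "w = butlast w @ [last w]"
    using assms by (metis length_0_conv list.collapse, simp)
  then have "dotp u (c # butlast w) = ((hd u \<and> c) \<noteq> dotp (tl u) (butlast w))"
    by (metis dotp_Cons)
  also have "dotp (tl u) (butlast w) = dotp (tl u @ [False]) w"
    using assms \<open>w = butlast w @ [last w]\<close> by (metis dotp_append dotp_Cons dotp_Nil length_butlast length_tl)
  finally show ?thesis by auto
qed

lemma nl_eq_0_iff:
  "nl m h = 0 \<longleftrightarrow> (\<exists>a\<in>vecs m. \<exists>c. \<forall>x\<in>vecs m. h x = (c \<noteq> dotp a x))"
proof -
  let ?D = "{hdist m h (affine_fun m a c) | a c. a \<in> vecs m}"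
  have "?D \<subseteq> (\<lambda>(a, c). hdist m h (affine_fun m a c)) ` (vecs m \<times> UNIV)"
    by auto
  moreover have "finite (vecs m \<times> (UNIV :: bool set))"
    using finite_vecs by simp
  ultimately have "finite ?D"
    by (rule finite_subset[OF _ finite_imageI])
  moreover have "replicate m False \<in> vecs m"
    by (simp add: vecs_def)
  then have "?D \<noteq> {}"
    by blast
  moreover have "hdist m h (affine_fun m a c) = 0 \<longleftrightarrow> (\<forall>x\<in>vecs m. h x = (c \<noteq> dotp a x))"
    for a c
    using finite_vecs[of m] by (auto simp: hdist_def affine_fun_def)
  ultimately show ?thesis
    unfolding nl_def by (auto simp: Min_eq_iff)
qed

lemma nl_eq_0_comp_linear:
  assumes "nl m h = 0"
    and "\<And>x. x \<in> vecs m \<Longrightarrow> s x \<in> vecs m"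
    and "\<And>a. a \<in> vecs m \<Longrightarrow> t a \<in> vecs m"
    and "\<And>a x. a \<in> vecs m \<Longrightarrow> x \<in> vecs m \<Longrightarrow> dotp a (s x) = dotp (t a) x"
    and "\<And>x. x \<in> vecs m \<Longrightarrow> h' x = h (s x)"
  shows "nl m h' = 0"
proof -
  obtain a c where "a \<in> vecs m" and "\<forall>x\<in>vecs m. h x = (c \<noteq> dotp a x)"
    using assms(1) by (auto simp: nl_eq_0_iff)
  then have "t a \<in> vecs m" and "\<forall>x\<in>vecs m. h' x = (c \<noteq> dotp (t a) x)"
    using assms(2-5) by auto
  then show ?thesis
    by (auto simp: nl_eq_0_iff)
qed

lemma length_nbca [simp]: "length (nbca b f x) = b"
  by (simp add: nbca_def)

lemma butlast_nbca_shift_left: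
  assumes "length x = 2 * b"
  shows "butlast (nbca b f (tl x @ [False])) = tl (nbca b f x)"
proof -
  have "take (b + 1) (drop i (tl x @ [False])) = take (b + 1) (drop (Suc i) x)" if "i < b - 1" for i
    using that assms by (simp add: drop_Suc)
  then show ?thesis
    by (intro nth_equalityI) (auto simp: nbca_def nth_butlast nth_tl)
qed

lemma tl_nbca_shift_right:
  assumes "length x = 2 * b"
  shows "tl (nbca b f (False # butlast x)) = butlast (nbca b f x)"
proof -
  have "take (b + 1) (drop (Suc i) (False # butlast x)) = take (b + 1) (drop i x)" if "i < b - 1" for i
    using that assms by (simp add: butlast_drop[symmetric] take_butlast)
  then show ?thesis
    by (intro nth_equalityI) (auto simp: nbca_def nth_butlast nth_tl simp del: drop_Suc_Cons)
qed

lemma dotp_nbca_shift_left: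
  assumes "length u = b" and "length x = 2 * b" and "b \<ge> 1" and "\<not> last u"
  shows "dotp u (nbca b f (tl x @ [False])) = dotp (False # butlast u) (nbca b f x)"
proof -
  let ?w = "nbca b f (tl x @ [False])"
  have "nbca b f x \<noteq> []" and "?w \<noteq> []"
    using assms(3) by (auto simp flip: length_0_conv)
  then have "?w = tl (nbca b f x) @ [last ?w]"
    using butlast_nbca_shift_left[OF assms(2)] by (metis append_butlast_last_id)
  then have "dotp u ?w = dotp u (tl (nbca b f x) @ [last ?w])"
    by simp
  also have "\<dots> = dotp (False # butlast u) (nbca b f x)"
    using assms \<open>nbca b f x \<noteq> []\<close> by (simp add: dotp_tl_snoc)
  finally show ?thesis .
qed

lemma dotp_nbca_shift_right:
  assumes "length u = b" and "length x = 2 * b" and "b \<ge> 1" and "\<not> hd u"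
  shows "dotp u (nbca b f (False # butlast x)) = dotp (tl u @ [False]) (nbca b f x)"
proof -
  let ?w = "nbca b f (False # butlast x)"
  have "nbca b f x \<noteq> []" and "?w \<noteq> []"
    using assms(3) by (auto simp flip: length_0_conv)
  then have "?w = hd ?w # butlast (nbca b f x)"
    using tl_nbca_shift_right[OF assms(2)] by (metis list.collapse)
  then have "dotp u ?w = dotp u (hd ?w # butlast (nbca b f x))"
    by simp
  also have "\<dots> = dotp (tl u @ [False]) (nbca b f x)"
    using assms \<open>nbca b f x \<noteq> []\<close> by (simp add: dotp_Cons_butlast)
  finally show ?thesis .
qed

lemma dotp_sbox:
  assumes "length v = 2 * b"
  shows "dotp v (sbox b f g x) = (dotp (take b v) (nbca b f x) \<noteq> dotp (drop b v) (nbca b g x))"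
  using assms dotp_append[of "take b v" "nbca b f x" "drop b v" "nbca b g x"]
  by (simp add: sbox_def)

lemma dotp_sbox_shift_left:
  assumes "length v = 2 * b" and "length x = 2 * b" and "b \<ge> 1"
    and "\<not> v ! (b - 1)" and "\<not> v ! (2 * b - 1)"
  shows "dotp (False # butlast v) (sbox b f g x) = dotp v (sbox b f g (tl x @ [False]))"
proof -
  have "take b (False # butlast v) = False # butlast (take b v)"
    using assms(1,3) by (cases b) (auto simp: butlast_take take_butlast)
  moreover have "drop (b - 1) v = v ! (b - 1) # drop b v" and "drop b v \<noteq> []"
    using assms(1,3) Cons_nth_drop_Suc[of "b - 1" v] by auto
  then have "drop b (False # butlast v) = False # butlast (drop b v)"
    using assms(3,4) by (cases b) (auto simp: butlast_drop[symmetric])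
  moreover have "last (take b v) = v ! (b - 1)" and "last (drop b v) = v ! (2 * b - 1)"
    using assms(1,3) by (cases b, simp_all add: take_Suc_conv_app_nth last_conv_nth mult_2)
  ultimately show ?thesis
    using assms by (simp add: dotp_sbox dotp_nbca_shift_left)
qed

lemma dotp_sbox_shift_right:
  assumes "length v = 2 * b" and "length x = 2 * b" and "b \<ge> 1"
    and "\<not> v ! 0" and "\<not> v ! b"
  shows "dotp (tl v @ [False]) (sbox b f g x) = dotp v (sbox b f g (False # butlast x))"
proof -
  have drop_v: "drop b v = v ! b # drop (Suc b) v"
    using assms(1,3) by (intro Cons_nth_drop_Suc[symmetric]) simp
  moreover have "take b v \<noteq> []"
    using assms(1,3) by (auto simp flip: length_0_conv)
  then have "tl v = tl (take b v) @ drop b v"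
    by (metis append_take_drop_id tl_append2)
  ultimately have split_v: "tl v @ [False] = (tl (take b v) @ [False]) @ (tl (drop b v) @ [False])"
    using assms(5) by simp
  have "hd (take b v) = v ! 0" and "hd (drop b v) = v ! b"
    using assms(1,3) by (auto simp: hd_drop_conv_nth hd_conv_nth simp flip: length_0_conv)
  then have halves: "dotp (take b v) (nbca b f (False # butlast x)) = dotp (tl (take b v) @ [False]) (nbca b f x)"
    "dotp (drop b v) (nbca b g (False # butlast x)) = dotp (tl (drop b v) @ [False]) (nbca b g x)"
    using assms by (simp_all add: dotp_nbca_shift_right)
  have "length (tl (take b v) @ [False]) = length (nbca b f x)"
    using assms(1,3) by simp
  then have "dotp (tl v @ [False]) (sbox b f g x)
      = (dotp (tl (take b v) @ [False]) (nbca b f x) \<noteq> dotp (tl (drop b v) @ [False]) (nbca b g x))"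
    unfolding split_v sbox_def by (rule dotp_append)
  also have "\<dots> = dotp v (sbox b f g (False # butlast x))"
    unfolding dotp_sbox[OF assms(1)] halves ..
  finally show ?thesis .
qed

theorem lemma3:
  fixes b :: nat and f g :: "bool list \<Rightarrow> bool" and v :: "bool list"
  assumes "b \<ge> 1"
    and "bipermutive (b + 1) f" and "nonlinear (b + 1) f"
    and "bipermutive (b + 1) g" and "nonlinear (b + 1) g"
    and "orthogonal_ca b f g"
    and "v \<in> vecs (2 * b)" and "v \<noteq> replicate (2 * b) False"
    and "nl (2 * b) (\<lambda>x. dotp v (sbox b f g x)) = 0"
  shows "(\<not> v ! (b - 1) \<and> \<not> v ! (2 * b - 1) \<longrightarrow>
            nl (2 * b) (\<lambda>x. dotp (False # butlast v) (sbox b f g x)) = 0)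
       \<and> (\<not> v ! 0 \<and> \<not> v ! b \<longrightarrow>
            nl (2 * b) (\<lambda>x. dotp (tl v @ [False]) (sbox b f g x)) = 0)"
proof -
  have v: "length v = 2 * b"
    using assms(7) by (simp add: vecs_def)
  have nonempty: "x \<in> vecs (2 * b) \<Longrightarrow> x \<noteq> []" for x
    using assms(1) by (auto simp: vecs_def)
  show ?thesis
  proof (intro conjI impI)
    assume "\<not> v ! (b - 1) \<and> \<not> v ! (2 * b - 1)"
    then show "nl (2 * b) (\<lambda>x. dotp (False # butlast v) (sbox b f g x)) = 0"
      using v assms(1) nonempty
      by (intro nl_eq_0_comp_linear[OF assms(9), where s = "\<lambda>x. tl x @ [False]"
          and t = "\<lambda>a. False # butlast a"])
        (auto simp: vecs_def dotp_sbox_shift_left dotp_tl_snoc)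
  next
    assume "\<not> v ! 0 \<and> \<not> v ! b"
    then show "nl (2 * b) (\<lambda>x. dotp (tl v @ [False]) (sbox b f g x)) = 0"
      using v assms(1) nonempty
      by (intro nl_eq_0_comp_linear[OF assms(9), where s = "\<lambda>x. False # butlast x"
          and t = "\<lambda>a. tl a @ [False]"])
        (auto simp: vecs_def dotp_sbox_shift_right dotp_Cons_butlast)
  qed
qed

end
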